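(* Let $\mathcal G=(\mathcal V,\mathcal E)$ be a finite digraph with vertices $v_1,\dots,v_N$, run the synchronous dynamics described in the context, let $K=\min\{k\ge 1: w_i[k]=\text{True for all } i=1,\dots,N\}$ and set $\mathcal S_i^*=z_i[K]$. Then $K$ exists, and for every $i$, $\mathcal S_i^*$ is the vertex set of the strongly connected component of $\mathcal G$ containing $v_i$. Consequently, the distinct subgraphs among $(\mathcal S_i^*,(\mathcal S_i^*\times\mathcal S_i^* )\cap\mathcal E)$, $i=1,\dots,N$, are exactly the strongly connected components $\mathcal G_1,\dots,\mathcal G_m$ of $\mathcal G$: their vertex sets are pairwise disjoint, each is a maximal strongly connected subgraph, and $\bigcup_s\mathcal G_s=(\bigcup_s\mathcal V_s,\bigcup_s\mathcal E_s)$ has vertex set $\mathcal V$ and edge set contained in $\mathcal E$.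
   Context: For $v\in\mathcal V$, $\mathcal N^-_{v}=\{u:(u,v)\in\mathcal E\}$ is the set of in-neighbors of $v$. A strongly connected component (SCC) is a maximal set of vertices such that for any two of its vertices there is a directed path from each to the other (a single vertex counts as strongly connected to itself); the SCC as a subgraph has vertex set $\mathcal V_s$ and edge set $(\mathcal V_s\times\mathcal V_s)\cap\mathcal E$. The dynamics are run synchronously by all vertices at every time step $k=0,1,2,\dots$: initialize $x_i[0]=\{v_i\}$, $y_i[0]=1$, $z_i[0]=\emptyset$, $w_i[0]=\text{False}$, and for $k\ge 0$ set $x_i[k+1]=\bigcup_{v_j\in\mathcal N^-_{v_i}\cup\{v_i\}}x_j[k]$; $y_i[k+1]=\max\{\max_{v_j\in\mathcal N^-_{v_i}}|x_j[k]|,\ |x_i[k+1]|\}$ (the inner maximum is omitted if $\mathcal N^-_{v_i}=\emptyset$); $z_i[k+1]=\{v_j:\ y_i[k+1]=y_j[k]\ \text{and}\ v_j\in\bigcup_{v_l\in\mathcal N^-_{v_i}\cup\{v_i\}}x_l[k]\}$; $w_i[k+1]=\text{True}$ if $y_i[k+1]=y_i[k]$ and False otherwise. All vertices keep updating until every vertex has $w_i=\text{True}$. *)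

theory Defs
  imports Main
begin

definition in_nbrs :: "('a \<times> 'a) set \<Rightarrow> 'a \<Rightarrow> 'a set" where
  "in_nbrs E v = {u. (u, v) \<in> E}"

primrec xs :: "('a \<times> 'a) set \<Rightarrow> nat \<Rightarrow> 'a \<Rightarrow> 'a set" where
  "xs E 0 v = {v}"
| "xs E (Suc k) v = (\<Union>u \<in> in_nbrs E v \<union> {v}. xs E k u)"

primrec ys :: "('a \<times> 'a) set \<Rightarrow> nat \<Rightarrow> 'a \<Rightarrow> nat" where
  "ys E 0 v = 1"
| "ys E (Suc k) v =
     Max (insert (card (xs E (Suc k) v)) ((\<lambda>u. card (xs E k u)) ` in_nbrs E v))"

fun zs :: "('a \<times> 'a) set \<Rightarrow> nat \<Rightarrow> 'a \<Rightarrow> 'a set" where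
  "zs E 0 v = {}"
| "zs E (Suc k) v =
     {u. ys E (Suc k) v = ys E k u \<and> u \<in> (\<Union>l \<in> in_nbrs E v \<union> {v}. xs E k l)}"

fun ws :: "('a \<times> 'a) set \<Rightarrow> nat \<Rightarrow> 'a \<Rightarrow> bool" where
  "ws E 0 v = False"
| "ws E (Suc k) v = (ys E (Suc k) v = ys E k v)"

definition strongly_connected_set :: "'a set \<Rightarrow> ('a \<times> 'a) set \<Rightarrow> 'a set \<Rightarrow> bool" where
  "strongly_connected_set V E S \<longleftrightarrow>
     S \<noteq> {} \<and> S \<subseteq> V \<and> (\<forall>a\<in>S. \<forall>b\<in>S. (a, b) \<in> E\<^sup>*)"

definition is_scc :: "'a set \<Rightarrow> ('a \<times> 'a) set \<Rightarrow> 'a set \<Rightarrow> bool" where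
  "is_scc V E S \<longleftrightarrow> strongly_connected_set V E S \<and>
     (\<forall>S'. strongly_connected_set V E S' \<and> S \<subseteq> S' \<longrightarrow> S' = S)"

definition stop_time :: "'a set \<Rightarrow> ('a \<times> 'a) set \<Rightarrow> nat" where
  "stop_time V E = (LEAST k. k \<ge> 1 \<and> (\<forall>v\<in>V. ws E k v))"

end

theory Submission
  imports Defs
begin

text \<open>The set xs E k v consists of the ancestors of v at distance at most k, and ys E k v is
its cardinality. While some vertex still gains ancestors, the total number of
(ancestor, vertex) pairs grows, so this must stop; once no vertex gains an ancestor in one
round, every xs E k v is the full ancestor set A(v). Then z collects the ancestors u of v with
|A(u)| = |A(v)|; as A(u) \<subseteq> A(v), this forces A(u) = A(v), i.e. v is an ancestor of u as well,
so z is the strongly connected component of v.\<close>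

definition ancestors :: "('a \<times> 'a) set \<Rightarrow> 'a \<Rightarrow> 'a set" where
  "ancestors E v = {u. (u, v) \<in> E\<^sup>*}"

definition scc_of :: "('a \<times> 'a) set \<Rightarrow> 'a \<Rightarrow> 'a set" where
  "scc_of E v = {u. (u, v) \<in> E\<^sup>* \<and> (v, u) \<in> E\<^sup>*}"

lemma ancestors_subset_Domain: "ancestors E v \<subseteq> insert v (Domain E)"
  unfolding ancestors_def by (auto elim: converse_rtranclE)

lemma finite_ancestors: "finite E \<Longrightarrow> finite (ancestors E v)"
  by (rule finite_subset[OF ancestors_subset_Domain]) (simp add: finite_Domain)

lemma ancestors_subset_ancestors: "u \<in> ancestors E v \<Longrightarrow> ancestors E u \<subseteq> ancestors E v"
  unfolding ancestors_def by (auto intro: rtrancl_trans)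

lemma in_nbrs_subset_Domain: "in_nbrs E v \<subseteq> Domain E"
  unfolding in_nbrs_def by blast

lemma scc_of_subset_ancestors: "scc_of E v \<subseteq> ancestors E v"
  unfolding scc_of_def ancestors_def by blast

lemma scc_of_conv_card_ancestors:
  assumes "finite E"
  shows "scc_of E v = {u \<in> ancestors E v. card (ancestors E u) = card (ancestors E v)}"
proof (intro set_eqI iffI)
  fix u assume u: "u \<in> scc_of E v"
  then have anc: "u \<in> ancestors E v" "v \<in> ancestors E u"
    by (simp_all add: scc_of_def ancestors_def)
  then have "ancestors E u = ancestors E v"
    by (intro subset_antisym ancestors_subset_ancestors)
  with anc(1) show "u \<in> {u \<in> ancestors E v. card (ancestors E u) = card (ancestors E v)}"
    by simp
next
  fix u assume u: "u \<in> {u \<in> ancestors E v. card (ancestors E u) = card (ancestors E v)}"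
  then have "ancestors E u = ancestors E v"
    using card_subset_eq[OF finite_ancestors[OF assms] ancestors_subset_ancestors] by auto
  then have "v \<in> ancestors E u"
    by (simp add: ancestors_def)
  with u show "u \<in> scc_of E v"
    by (simp add: ancestors_def scc_of_def)
qed

lemma in_xs_self: "v \<in> xs E k v"
  by (induction k arbitrary: v) auto

lemma xs_subset_xs_Suc: "xs E k v \<subseteq> xs E (Suc k) v"
  by auto

lemma xs_mono: "k \<le> k' \<Longrightarrow> xs E k v \<subseteq> xs E k' v"
  using lift_Suc_mono_le[of "\<lambda>k. xs E k v", OF xs_subset_xs_Suc] by blast

lemma xs_subset_ancestors: "xs E k v \<subseteq> ancestors E v"
proof (induction k arbitrary: v)
  case 0
  then show ?case by (simp add: ancestors_def)
next
  case (Suc k)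
  have "xs E k u \<subseteq> ancestors E v" if "u \<in> in_nbrs E v \<union> {v}" for u
  proof -
    have "u \<in> ancestors E v"
      using that unfolding in_nbrs_def ancestors_def by blast
    then show ?thesis
      using Suc.IH[of u] ancestors_subset_ancestors[of u E v] by (rule_tac subset_trans)
  qed
  then show ?case
    by (simp only: xs.simps UN_subset_iff) blast
qed

lemma ancestor_in_xs: "(u, v) \<in> E\<^sup>* \<Longrightarrow> \<exists>k. u \<in> xs E k v"
proof (induction rule: rtrancl_induct)
  case base
  show ?case by (meson in_xs_self)
next
  case (step w v)
  then obtain k where "u \<in> xs E k w" by blast
  moreover have "w \<in> in_nbrs E v" using step by (simp add: in_nbrs_def)
  ultimately have "u \<in> xs E (Suc k) v" by auto
  then show ?case by blast
qed

lemma finite_xs: "finite E \<Longrightarrow> finite (xs E k v)"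
  using finite_ancestors xs_subset_ancestors finite_subset by metis

lemma ys_eq_card:
  assumes "finite E"
  shows "ys E k v = card (xs E k v)"
proof (cases k)
  case 0
  then show ?thesis by simp
next
  case (Suc j)
  have "card (xs E j u) \<le> card (xs E (Suc j) v)" if "u \<in> in_nbrs E v" for u
    using that by (intro card_mono[OF finite_xs[OF assms]]) auto
  moreover have "finite (in_nbrs E v)"
    using assms by (rule finite_subset[OF in_nbrs_subset_Domain finite_Domain])
  ultimately show ?thesis
    unfolding Suc ys.simps by (intro Max_eqI) auto
qed

lemma ws_Suc_iff:
  assumes "finite E"
  shows "ws E (Suc k) v \<longleftrightarrow> xs E (Suc k) v = xs E k v"
proof -
  have "ws E (Suc k) v \<longleftrightarrow> card (xs E (Suc k) v) = card (xs E k v)"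
    by (simp only: ws.simps ys_eq_card[OF assms])
  also have "\<dots> \<longleftrightarrow> xs E (Suc k) v = xs E k v"
    by (metis card_subset_eq finite_xs[OF assms] xs_subset_xs_Suc)
  finally show ?thesis .
qed

lemma zs_Suc: "zs E (Suc k) v = {u \<in> xs E (Suc k) v. ys E k u = ys E (Suc k) v}"
  by auto

text \<open>The potential \<open>\<Sum>v\<in>V. |xs E k v|\<close> grows strictly in every round in which some vertex
of V is not yet settled, yet it stays bounded.\<close>

lemma ex_all_ws:
  assumes "finite V" "finite E"
  shows "\<exists>k\<ge>1. \<forall>v\<in>V. ws E k v"
proof (rule ccontr)
  assume unsettled: "\<not> ?thesis"
  define f where "f k = (\<Sum>v\<in>V. card (xs E k v))" for k
  have "f k < f (Suc k)" for k
  proof -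
    have "\<not> (\<forall>v\<in>V. ws E (Suc k) v)"
      using unsettled by (auto simp del: ws.simps)
    then obtain v where v: "v \<in> V" "\<not> ws E (Suc k) v"
      by blast
    have "card (xs E k u) \<le> card (xs E (Suc k) u)" for u
      by (rule card_mono[OF finite_xs[OF assms(2)] xs_subset_xs_Suc])
    moreover have "card (xs E k v) \<noteq> card (xs E (Suc k) v)"
      using v(2) ws_Suc_iff[OF assms(2)] card_subset_eq[OF finite_xs[OF assms(2)] xs_subset_xs_Suc]
      by metis
    ultimately show ?thesis
      unfolding f_def using sum_strict_mono_ex1[OF assms(1)] v(1)
      by (metis (no_types, lifting) le_neq_implies_less)
  qed
  then have increasing: "k \<le> f k" for k
    by (simp add: strict_mono_Suc_iff strict_mono_imp_increasing)
  define B where "B = card V * Suc (card (Domain E))"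
  have bounded: "f k \<le> B" for k
  proof -
    have "card (xs E k v) \<le> Suc (card (Domain E))" for v
    proof -
      have "card (xs E k v) \<le> card (insert v (Domain E))"
        using assms(2) xs_subset_ancestors[of E k v] ancestors_subset_Domain[of E v]
        by (intro card_mono) (simp_all add: finite_Domain)
      also have "\<dots> \<le> Suc (card (Domain E))"
        using assms(2) by (simp add: card_insert_if finite_Domain)
      finally show ?thesis .
    qed
    then have "(\<Sum>v\<in>V. card (xs E k v)) \<le> of_nat (card V) * Suc (card (Domain E))"
      by (intro sum_bounded_above)
    then show ?thesis
      unfolding f_def B_def by simp
  qed
  show False
    using le_trans[OF increasing bounded, of "Suc B"] by simp
qed

lemma xs_stable:
  assumes "E \<subseteq> V \<times> V" "\<forall>v\<in>V. xs E (Suc K) v = xs E K v" "v \<in> V"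
  shows "xs E (K + m) v = xs E K v"
  using assms(3)
proof (induction m arbitrary: v)
  case 0
  then show ?case by simp
next
  case (Suc m)
  have "in_nbrs E v \<union> {v} \<subseteq> V"
    using assms(1) Suc.prems by (auto simp: in_nbrs_def)
  then have "xs E (K + Suc m) v = xs E (Suc K) v"
    using Suc.IH by (auto intro!: SUP_cong)
  also have "\<dots> = xs E K v"
    using assms(2) Suc.prems by blast
  finally show ?case .
qed

lemma xs_stable_eq_ancestors:
  assumes "E \<subseteq> V \<times> V" "\<forall>v\<in>V. xs E (Suc K) v = xs E K v" "v \<in> V"
  shows "xs E K v = ancestors E v"
proof (rule subset_antisym[OF xs_subset_ancestors subsetI])
  fix u assume "u \<in> ancestors E v"
  then have "(u, v) \<in> E\<^sup>*"
    by (simp add: ancestors_def)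
  then obtain k where "u \<in> xs E k v"
    using ancestor_in_xs by metis
  then have "u \<in> xs E (K + k) v"
    using xs_mono[of k "K + k" E v] by auto
  then show "u \<in> xs E K v"
    using xs_stable[OF assms, of k] by simp
qed

lemma zs_eq_scc_of:
  assumes "finite E" "E \<subseteq> V \<times> V" "\<forall>v\<in>V. ws E (Suc K) v" "v \<in> V"
  shows "zs E (Suc K) v = scc_of E v"
proof -
  have stable: "\<forall>v\<in>V. xs E (Suc K) v = xs E K v"
    using assms(3) ws_Suc_iff[OF assms(1)] by blast
  have xs_K: "xs E K w = ancestors E w" if "w \<in> V" for w
    using xs_stable_eq_ancestors[OF assms(2) stable that] .
  have ancestors_V: "ancestors E v \<subseteq> V"
    using ancestors_subset_Domain[of E v] assms(2,4) by auto
  have xs_Suc_K: "xs E (Suc K) v = ancestors E v"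
    using stable assms(4) xs_K by metis
  have ys_K: "ys E K u = card (ancestors E u)" if "u \<in> V" for u
    using xs_K[OF that] by (simp only: ys_eq_card[OF assms(1)])
  have ys_Suc_K: "ys E (Suc K) v = card (ancestors E v)"
    using xs_Suc_K by (simp only: ys_eq_card[OF assms(1)])
  have "zs E (Suc K) v = {u \<in> ancestors E v. card (ancestors E u) = card (ancestors E v)}"
    unfolding zs_Suc xs_Suc_K ys_Suc_K using ancestors_V ys_K by auto
  then show ?thesis
    using scc_of_conv_card_ancestors[OF assms(1)] by simp
qed

lemma scc_of_self [simp]: "v \<in> scc_of E v"
  by (simp add: scc_of_def)

lemma scc_of_subset:
  assumes "E \<subseteq> V \<times> V" "v \<in> V"
  shows "scc_of E v \<subseteq> V"
proof -
  have "insert v (Domain E) \<subseteq> V"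
    using assms by blast
  then show ?thesis
    using scc_of_subset_ancestors[of E v] ancestors_subset_Domain[of E v] by blast
qed

lemma scc_of_eq: "w \<in> scc_of E v \<Longrightarrow> scc_of E w = scc_of E v"
  unfolding scc_of_def by (auto intro: rtrancl_trans)

lemma strongly_connected_scc_of:
  assumes "E \<subseteq> V \<times> V" "v \<in> V"
  shows "strongly_connected_set V E (scc_of E v)"
  unfolding strongly_connected_set_def
proof (intro conjI ballI)
  show "scc_of E v \<noteq> {}"
    using scc_of_self[of v E] by blast
  show "scc_of E v \<subseteq> V"
    using assms by (rule scc_of_subset)
  fix a b assume "a \<in> scc_of E v" "b \<in> scc_of E v"
  then have "(a, v) \<in> E\<^sup>*" "(v, b) \<in> E\<^sup>*"
    by (simp_all add: scc_of_def)
  then show "(a, b) \<in> E\<^sup>*"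
    by (rule rtrancl_trans)
qed

lemma strongly_connected_subset_scc_of:
  "strongly_connected_set V E S \<Longrightarrow> v \<in> S \<Longrightarrow> S \<subseteq> scc_of E v"
  unfolding strongly_connected_set_def scc_of_def by blast

lemma scc_of_maximal:
  assumes "strongly_connected_set V E S" "scc_of E v \<subseteq> S"
  shows "S = scc_of E v"
proof -
  have "v \<in> S"
    using assms(2) scc_of_self by (rule subsetD)
  then have "S \<subseteq> scc_of E v"
    by (rule strongly_connected_subset_scc_of[OF assms(1)])
  then show ?thesis
    using assms(2) by (rule subset_antisym)
qed

lemma is_scc_scc_of: "E \<subseteq> V \<times> V \<Longrightarrow> v \<in> V \<Longrightarrow> is_scc V E (scc_of E v)"
  unfolding is_scc_def using strongly_connected_scc_of scc_of_maximal by metis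

lemma is_scc_iff_eq_scc_of:
  assumes "E \<subseteq> V \<times> V"
  shows "is_scc V E S \<longleftrightarrow> (\<exists>v\<in>V. S = scc_of E v)"
proof
  assume S: "is_scc V E S"
  then have connected: "strongly_connected_set V E S"
    by (simp add: is_scc_def)
  then obtain v where v: "v \<in> S" "v \<in> V"
    unfolding strongly_connected_set_def by blast
  have "S \<subseteq> scc_of E v"
    using connected v(1) by (rule strongly_connected_subset_scc_of)
  then have "S = scc_of E v"
    using S strongly_connected_scc_of[OF assms v(2)] unfolding is_scc_def by blast
  with v(2) show "\<exists>v\<in>V. S = scc_of E v" ..
next
  assume "\<exists>v\<in>V. S = scc_of E v"
  then show "is_scc V E S"
    using is_scc_scc_of[OF assms] by auto
qed

theorem theorem1:
  fixes V :: "'a set" and E :: "('a \<times> 'a) set"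
  assumes "finite V" and "E \<subseteq> V \<times> V"
  defines "K \<equiv> stop_time V E"
  shows "(\<exists>k\<ge>1. \<forall>v\<in>V. ws E k v)
    \<and> (\<forall>v\<in>V. v \<in> zs E K v \<and> is_scc V E (zs E K v))
    \<and> {(zs E K v, (zs E K v \<times> zs E K v) \<inter> E) | v. v \<in> V}
        = {(S, (S \<times> S) \<inter> E) | S. is_scc V E S}
    \<and> (\<forall>u\<in>V. \<forall>v\<in>V. zs E K u = zs E K v \<or> zs E K u \<inter> zs E K v = {})
    \<and> (\<forall>v\<in>V. \<forall>S'. strongly_connected_set V E S' \<and> zs E K v \<subseteq> S' \<longrightarrow> S' = zs E K v)
    \<and> (\<Union>v\<in>V. zs E K v) = V
    \<and> (\<Union>v\<in>V. (zs E K v \<times> zs E K v) \<inter> E) \<subseteq> E"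
proof -
  have "finite E"
    by (rule finite_subset[OF assms(2)]) (simp add: assms(1))
  then have ex: "\<exists>k\<ge>1. \<forall>v\<in>V. ws E k v"
    by (rule ex_all_ws[OF assms(1)])
  have "1 \<le> K \<and> (\<forall>v\<in>V. ws E K v)"
    unfolding K_def stop_time_def by (rule LeastI_ex[OF ex])
  then obtain K' where "K = Suc K'" "\<forall>v\<in>V. ws E (Suc K') v"
    by (cases K) auto
  then have zs_K: "zs E K v = scc_of E v" if "v \<in> V" for v
    using zs_eq_scc_of[OF \<open>finite E\<close> assms(2) _ that] by simp
  have "{S. is_scc V E S} = scc_of E ` V"
    unfolding is_scc_iff_eq_scc_of[OF assms(2)] by blast
  also have "\<dots> = zs E K ` V"
    using zs_K by simp
  finally have "{(zs E K v, (zs E K v \<times> zs E K v) \<inter> E) | v. v \<in> V}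
        = {(S, (S \<times> S) \<inter> E) | S. is_scc V E S}"
    unfolding Setcompr_eq_image setcompr_eq_image by (simp add: image_image)
  moreover have "\<forall>u\<in>V. \<forall>v\<in>V. zs E K u = zs E K v \<or> zs E K u \<inter> zs E K v = {}"
    by (auto simp: zs_K dest: scc_of_eq)
  moreover have "(\<Union>v\<in>V. zs E K v) = V"
    using scc_of_subset[OF assms(2)] by (auto simp: zs_K)
  ultimately show ?thesis
    using ex is_scc_scc_of[OF assms(2)] scc_of_maximal[of V E] by (auto simp: zs_K)
qed

end
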